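(* Let $n\ge3$, $0<\epsilon<1$, and define $\alpha,\beta,\gamma,\delta$ and the polynomial $Q(\rho)$ as in the context. If $\epsilon>0$ is sufficiently small, then: (1) $Q(1) = Q'(1) = 0$ and $Q''(1) = 2$; (2) $Q(\epsilon) = 0$ and $Q'(\epsilon) = \epsilon^{n-2}(1-\epsilon)$.
   Context: $D(\epsilon) = -n\epsilon^{n+2} + (n+2)\epsilon^{n+1} + n - (n+2)\epsilon$, $N(\epsilon) = -n\epsilon^{n+1} + (n+1)\epsilon^n - 1$, $K(\epsilon) = -1 + \frac{n+1}{n-1}\epsilon - \epsilon^{n-1} + \frac{n-3}{n-1}\epsilon^n$, $M(\epsilon) = \frac{\epsilon^{n+1}-1}{n(n+1)} + \frac{\epsilon-\epsilon^n}{n(n-1)}$; $\delta = \Big(\epsilon^{n-2}(1-\epsilon) - \frac{(n+2)N K}{D} + \frac{n(n-3)}{n-1}\epsilon^{n-1} - (n-1)\epsilon^{n-2} + \frac{n+1}{n-1}\Big)\Big(\frac{(n+2)N}{D}M + \frac{-(n-1)\epsilon^n + n\epsilon^{n-1}-1}{n(n-1)}\Big)^{-1}$, $\gamma = n(n+1)(n+2)(M\delta + K)/D$, $\alpha = -1 - \frac{\delta}{n(n+1)} - \frac{\gamma}{(n+1)(n+2)}$, $\beta = \frac{n+1}{n-1} + \frac{\delta}{n(n-1)} + \frac{\gamma}{n(n+1)}$ (denominators are nonzero for small $\epsilon$); $P(\rho) = -\frac{2n+\delta}{n(n-1)} + \frac{(\delta-\gamma)\rho}{n(n+1)} + \frac{\gamma\rho^2}{(n+1)(n+2)}$,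 $Q(\rho) = \rho^{n-1} - \rho^n - \rho^nP(\rho) - \alpha - \beta\rho$. *)

theory Defs
  imports "HOL-Analysis.Analysis"
begin

definition Dq :: "nat \<Rightarrow> real \<Rightarrow> real" where
  "Dq n e = - real n * e ^ (n + 2) + (real n + 2) * e ^ (n + 1) + real n - (real n + 2) * e"

definition Nq :: "nat \<Rightarrow> real \<Rightarrow> real" where
  "Nq n e = - real n * e ^ (n + 1) + (real n + 1) * e ^ n - 1"

definition Kq :: "nat \<Rightarrow> real \<Rightarrow> real" where
  "Kq n e = -1 + (real n + 1) / (real n - 1) * e - e ^ (n - 1) + (real n - 3) / (real n - 1) * e ^ n"

definition Mq :: "nat \<Rightarrow> real \<Rightarrow> real" where
  "Mq n e = (e ^ (n + 1) - 1) / (real n * (real n + 1)) + (e - e ^ n) / (real n * (real n - 1))"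

definition deltaq :: "nat \<Rightarrow> real \<Rightarrow> real" where
  "deltaq n e =
     (e ^ (n - 2) * (1 - e) - (real n + 2) * Nq n e * Kq n e / Dq n e
       + real n * (real n - 3) / (real n - 1) * e ^ (n - 1)
       - (real n - 1) * e ^ (n - 2) + (real n + 1) / (real n - 1))
     * inverse ((real n + 2) * Nq n e / Dq n e * Mq n e
       + (- (real n - 1) * e ^ n + real n * e ^ (n - 1) - 1) / (real n * (real n - 1)))"

definition gammaq :: "nat \<Rightarrow> real \<Rightarrow> real" where
  "gammaq n e = real n * (real n + 1) * (real n + 2) * (Mq n e * deltaq n e + Kq n e) / Dq n e"

definition alphaq :: "nat \<Rightarrow> real \<Rightarrow> real" where
  "alphaq n e = -1 - deltaq n e / (real n * (real n + 1)) - gammaq n e / ((real n + 1) * (real n + 2))"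

definition betaq :: "nat \<Rightarrow> real \<Rightarrow> real" where
  "betaq n e = (real n + 1) / (real n - 1) + deltaq n e / (real n * (real n - 1))
               + gammaq n e / (real n * (real n + 1))"

definition Pq :: "nat \<Rightarrow> real \<Rightarrow> real \<Rightarrow> real" where
  "Pq n e \<rho> = - (2 * real n + deltaq n e) / (real n * (real n - 1))
      + (deltaq n e - gammaq n e) * \<rho> / (real n * (real n + 1))
      + gammaq n e * \<rho>\<^sup>2 / ((real n + 1) * (real n + 2))"

definition Qq :: "nat \<Rightarrow> real \<Rightarrow> real \<Rightarrow> real" where
  "Qq n e \<rho> = \<rho> ^ (n - 1) - \<rho> ^ n - \<rho> ^ n * Pq n e \<rho> - alphaq n e - betaq n e * \<rho>"

end

theory Submission
  imports Defs
begin

text \<open>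
  After expanding P, Q is a combination of \<rho>^(n-1), \<rho>^n, \<rho>^(n+1), \<rho>^(n+2), 1 and \<rho> whose
  coefficients are affine in \<delta> and \<gamma>, and it makes sense for arbitrary parameters \<delta>, \<gamma>.
  The constants \<alpha>, \<beta> and the coefficients of P are chosen so that Q(1) = Q'(1) = 0 and
  Q''(1) = 2 whatever \<delta> and \<gamma> are. At \<rho> = \<epsilon> both Q(\<epsilon>) and Q'(\<epsilon>) - \<epsilon>^(n-2) (1 - \<epsilon>) are
  affine in (\<delta>, \<gamma>): the formula for \<gamma> is the solution of Q(\<epsilon>) = 0 for given \<delta>, and once \<gamma>
  is eliminated the second quantity becomes \<delta> b - a, where \<delta> = a / b is the formula for \<delta>.
  So all five identities hold as soon as D(\<epsilon>) \<noteq> 0 and b(\<epsilon>) \<noteq> 0, and by continuity this is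
  the case for small \<epsilon>, because D(0) = n and b(0) = -2 / (n^2 (n + 1) (n - 1)).
\<close>

definition Q_param :: "nat \<Rightarrow> real \<Rightarrow> real \<Rightarrow> real \<Rightarrow> real" where
  "Q_param n d g \<rho> =
     \<rho> ^ (n - 1) - (1 - (2 * real n + d) / (real n * (real n - 1))) * \<rho> ^ n
     - (d - g) / (real n * (real n + 1)) * \<rho> ^ (n + 1) - g / ((real n + 1) * (real n + 2)) * \<rho> ^ (n + 2)
     + 1 + d / (real n * (real n + 1)) + g / ((real n + 1) * (real n + 2))
     - ((real n + 1) / (real n - 1) + d / (real n * (real n - 1)) + g / (real n * (real n + 1))) * \<rho>"

definition Q_param_deriv :: "nat \<Rightarrow> real \<Rightarrow> real \<Rightarrow> real \<Rightarrow> real" where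
  "Q_param_deriv n d g \<rho> =
     (real n - 1) * \<rho> ^ (n - 2) - real n * (1 - (2 * real n + d) / (real n * (real n - 1))) * \<rho> ^ (n - 1)
     - (real n + 1) * ((d - g) / (real n * (real n + 1))) * \<rho> ^ n
     - (real n + 2) * (g / ((real n + 1) * (real n + 2))) * \<rho> ^ (n + 1)
     - ((real n + 1) / (real n - 1) + d / (real n * (real n - 1)) + g / (real n * (real n + 1)))"

definition gamma_of :: "nat \<Rightarrow> real \<Rightarrow> real \<Rightarrow> real" where
  "gamma_of n e d = real n * (real n + 1) * (real n + 2) * (Mq n e * d + Kq n e) / Dq n e"

definition delta_numer :: "nat \<Rightarrow> real \<Rightarrow> real" where
  "delta_numer n e = e ^ (n - 2) * (1 - e) - (real n + 2) * Nq n e * Kq n e / Dq n e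
       + real n * (real n - 3) / (real n - 1) * e ^ (n - 1)
       - (real n - 1) * e ^ (n - 2) + (real n + 1) / (real n - 1)"

definition delta_denom :: "nat \<Rightarrow> real \<Rightarrow> real" where
  "delta_denom n e = (real n + 2) * Nq n e / Dq n e * Mq n e
       + (- (real n - 1) * e ^ n + real n * e ^ (n - 1) - 1) / (real n * (real n - 1))"

lemma Qq_eq_Q_param: "Qq n e = Q_param n (deltaq n e) (gamma_of n e (deltaq n e))"
  by (simp add: fun_eq_iff Qq_def Pq_def alphaq_def betaq_def Q_param_def gammaq_def gamma_of_def
      algebra_simps power2_eq_square add_divide_distrib diff_divide_distrib)

lemma deltaq_mult_delta_denom:
  "delta_denom n e \<noteq> 0 \<Longrightarrow> deltaq n e * delta_denom n e = delta_numer n e"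
  by (simp add: deltaq_def delta_numer_def delta_denom_def)

lemma power_eq_power_minus_2:
  fixes x :: "'a::comm_monoid_mult"
  assumes "n \<ge> 2"
  shows "x ^ (n - 1) = x ^ (n - 2) * x" "x ^ n = x ^ (n - 2) * x\<^sup>2"
    "x ^ (n + 1) = x ^ (n - 2) * x ^ 3" "x ^ (n + 2) = x ^ (n - 2) * x ^ 4"
proof -
  obtain k where "n = k + 2" using assms le_Suc_ex by (metis add.commute)
  then show "x ^ (n - 1) = x ^ (n - 2) * x" "x ^ n = x ^ (n - 2) * x\<^sup>2"
    "x ^ (n + 1) = x ^ (n - 2) * x ^ 3" "x ^ (n + 2) = x ^ (n - 2) * x ^ 4"
    by (simp_all add: power2_eq_square power3_eq_cube power4_eq_xxxx mult_ac)
qed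

lemma real_of_nat_nonzero_shifts:
  "n \<ge> 2 \<Longrightarrow> real n \<noteq> 0 \<and> real n - 1 \<noteq> 0 \<and> real n + 1 \<noteq> 0 \<and> real n + 2 \<noteq> 0"
  by auto

lemma has_real_derivative_Q_param:
  assumes "n \<ge> 2"
  shows "(Q_param n d g has_real_derivative Q_param_deriv n d g \<rho>) (at \<rho>)"
  unfolding Q_param_def[abs_def]
  apply (rule derivative_eq_intros refl)+
  using assms real_of_nat_nonzero_shifts[OF assms]
  by (simp add: Q_param_deriv_def numeral_2_eq_2 divide_simps del: mult_minus_left) (simp add: algebra_simps)

lemma deriv_Q_param: "n \<ge> 2 \<Longrightarrow> deriv (Q_param n d g) = Q_param_deriv n d g"
  using has_real_derivative_Q_param DERIV_imp_deriv by blast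

lemma has_real_derivative_Q_param_deriv_at_1:
  assumes "n \<ge> 2"
  shows "(Q_param_deriv n d g has_real_derivative 2) (at 1)"
  unfolding Q_param_deriv_def[abs_def]
  apply (rule derivative_eq_intros refl)+
  using assms real_of_nat_nonzero_shifts[OF assms]
  by (simp add: divide_simps del: mult_minus_left) (simp add: algebra_simps)

lemma Q_param_at_1: "n \<ge> 2 \<Longrightarrow> Q_param n d g 1 = 0"
  by (simp add: Q_param_def divide_simps del: mult_minus_left) (simp add: algebra_simps)

lemma Q_param_deriv_at_1: "n \<ge> 2 \<Longrightarrow> Q_param_deriv n d g 1 = 0"
  by (simp add: Q_param_deriv_def divide_simps del: mult_minus_left) (simp add: algebra_simps)

lemma deriv2_Q_param_at_1: "n \<ge> 2 \<Longrightarrow> (deriv ^^ 2) (Q_param n d g) 1 = 2"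
  using DERIV_imp_deriv[OF has_real_derivative_Q_param_deriv_at_1] by (simp add: numeral_2_eq_2 deriv_Q_param)

lemma Q_param_gamma_of_at_eps:
  assumes "n \<ge> 2" "Dq n e \<noteq> 0"
  shows "Q_param n d (gamma_of n e d) e = 0"
proof -
  define p where "p = e ^ (n - 2)"
  note pw = power_eq_power_minus_2[OF assms(1), of e, folded p_def]
  have "Q_param n d g e = Dq n e * g / (real n * (real n + 1) * (real n + 2)) - (Mq n e * d + Kq n e)"
    for g
    unfolding Q_param_def Dq_def Mq_def Kq_def pw
    using real_of_nat_nonzero_shifts[OF assms(1)]
    by (simp add: divide_simps del: mult_minus_left)
      (simp add: algebra_simps power2_eq_square power3_eq_cube power4_eq_xxxx)
  then show ?thesis
    using assms real_of_nat_nonzero_shifts[OF assms(1)] by (simp add: gamma_of_def)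
qed

lemma Q_param_deriv_gamma_of_at_eps:
  assumes "n \<ge> 2" "Dq n e \<noteq> 0"
  shows "Q_param_deriv n d (gamma_of n e d) e = e ^ (n - 2) * (1 - e) + d * delta_denom n e - delta_numer n e"
proof -
  define p where "p = e ^ (n - 2)"
  note pw = power_eq_power_minus_2[OF assms(1), of e, folded p_def]
  show ?thesis
    unfolding Q_param_deriv_def gamma_of_def delta_numer_def delta_denom_def Nq_def pw p_def[symmetric]
    using assms(2) real_of_nat_nonzero_shifts[OF assms(1)]
    by (simp add: divide_simps del: mult_minus_left)
      (simp add: algebra_simps power2_eq_square power3_eq_cube power4_eq_xxxx)
qed

lemma Qq_boundary_conditions:
  assumes "n \<ge> 2" "Dq n e \<noteq> 0" "delta_denom n e \<noteq> 0"
  shows "Qq n e 1 = 0 \<and> deriv (Qq n e) 1 = 0 \<and> (deriv ^^ 2) (Qq n e) 1 = 2 \<and>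
           Qq n e e = 0 \<and> deriv (Qq n e) e = e ^ (n - 2) * (1 - e)"
proof -
  define d where "d = deltaq n e"
  have Q: "Qq n e = Q_param n d (gamma_of n e d)"
    unfolding d_def by (rule Qq_eq_Q_param)
  have "d * delta_denom n e = delta_numer n e"
    unfolding d_def using assms(3) by (rule deltaq_mult_delta_denom)
  then have "deriv (Qq n e) e = e ^ (n - 2) * (1 - e)"
    using Q_param_deriv_gamma_of_at_eps[OF assms(1,2)] by (simp add: Q deriv_Q_param[OF assms(1)])
  then show ?thesis
    using assms(1) Q_param_gamma_of_at_eps[OF assms(1,2)]
    by (simp add: Q Q_param_at_1 Q_param_deriv_at_1 deriv2_Q_param_at_1 deriv_Q_param)
qed

lemma Dq_at_0: "Dq n 0 = real n"
  by (simp add: Dq_def)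

lemma delta_denom_at_0:
  assumes "n \<ge> 2"
  shows "delta_denom n 0 = -2 / ((real n)\<^sup>2 * (real n + 1) * (real n - 1))"
proof -
  have "delta_denom n 0 = (real n + 2) / (real n * (real n * (real n + 1))) - 1 / (real n * (real n - 1))"
    using assms by (simp add: delta_denom_def Nq_def Dq_def Mq_def power_0_left)
      (simp add: minus_divide_left del: divide_minus_left)
  then show ?thesis
    using real_of_nat_nonzero_shifts[OF assms]
    by (simp add: divide_simps power2_eq_square del: mult_minus_left) (simp add: algebra_simps)
qed

lemma isCont_Dq: "isCont (Dq n) x"
  unfolding Dq_def[abs_def] by (intro continuous_intros)

lemma isCont_delta_denom_at_0: "n \<ge> 2 \<Longrightarrow> isCont (delta_denom n) 0"
  unfolding delta_denom_def[abs_def]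
  by (auto intro!: continuous_intros simp: Nq_def Dq_def Mq_def)

theorem lemma4p7:
  fixes n :: nat
  assumes "n \<ge> 3"
  shows "\<exists>e0>0. \<forall>e. 0 < e \<and> e < 1 \<and> e < e0 \<longrightarrow>
           Qq n e 1 = 0 \<and> deriv (Qq n e) 1 = 0 \<and> (deriv ^^ 2) (Qq n e) 1 = 2 \<and>
           Qq n e e = 0 \<and> deriv (Qq n e) e = e ^ (n - 2) * (1 - e)"
proof -
  have n2: "n \<ge> 2" using assms by simp
  obtain r1 where "r1 > 0" and r1: "\<forall>e. dist 0 e < r1 \<longrightarrow> Dq n e \<noteq> 0"
    using continuous_at_avoid[OF isCont_Dq[where n = n and x = 0], of 0] n2 by (auto simp: Dq_at_0)
  obtain r2 where "r2 > 0" and r2: "\<forall>e. dist 0 e < r2 \<longrightarrow> delta_denom n e \<noteq> 0"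
    using continuous_at_avoid[OF isCont_delta_denom_at_0[OF n2], of 0]
      real_of_nat_nonzero_shifts[OF n2] by (auto simp: delta_denom_at_0[OF n2])
  show ?thesis
  proof (rule exI[of _ "min r1 r2"], intro conjI[OF _ allI] impI, goal_cases)
    case 1
    show ?case using \<open>r1 > 0\<close> \<open>r2 > 0\<close> by simp
  next
    case (2 e)
    then have "Dq n e \<noteq> 0" "delta_denom n e \<noteq> 0" using r1 r2 by (auto simp: dist_real_def)
    then show ?case by (rule Qq_boundary_conditions[OF n2])
  qed
qed

end
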